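(* Let $(a_n)_{n\ge 1}$ be complex numbers and let $\sigma$ be the (finite) abscissa of absolute convergence of $\sum_{n\ge1} a_n n^{-s}$, i.e. $\sum |a_n| n^{-s}$ converges for real $s>\sigma$ and diverges for real $s<\sigma$; let $f(s)=\sum a_n n^{-s}$ for $\Re(s)>\sigma$. Let $c>0$ be real with $c>\sigma$, and let $R_c(x) = \sum_{k=1}^\infty (-1)^{k+1} f(ck)\,x^k/(k-1)!$. Then for every complex $s$ with $-1 < \Re(s) < -\sigma/c$, $$\int_0^\infty R_c(x)\,x^{s-1}\,dx = f(-cs)\,\Gamma(s+1),$$ the integral converging absolutely. *)

theory Defs
  imports "HOL-Analysis.Analysis"
begin

text \<open>Dirichlet series f(s) = sum_{n>=1} a_n n^{-s}; the coefficient a 0 is unused.\<close>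
definition dir_f :: "(nat \<Rightarrow> complex) \<Rightarrow> complex \<Rightarrow> complex" where
  "dir_f a s = (\<Sum>n. a (Suc n) / (of_nat (Suc n)) powr s)"

text \<open>R_c(x) = sum_{k>=1} (-1)^(k+1) f(c k) x^k / (k-1)!, written with k = Suc j.\<close>
definition R_c :: "(nat \<Rightarrow> complex) \<Rightarrow> real \<Rightarrow> real \<Rightarrow> complex" where
  "R_c a c x = (\<Sum>j. (-1) ^ (Suc j + 1) * dir_f a (complex_of_real (c * real (Suc j)))
                       * complex_of_real x ^ Suc j / of_nat (fact j))"

end

theory Submission
  imports Defs
begin

text \<open>
  Write lam_n = n powr (-c).  Since f(ck) = sum_n a_n lam_n^k, exchanging the two sums in the
  definition of R_c (justified by absolute convergence for c > sigma) and summing the exponential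
  series gives the closed form
     R_c(x) = sum_n a_n lam_n x exp(-lam_n x).
  Each summand has an explicit Mellin transform: by the scaled Gamma integral,
     integral_0^oo lam x exp(-lam x) x^(s-1) dx = lam^(-s) Gamma(s+1) = n^(cs) Gamma(s+1),
  and the integrals of the absolute values, |a_n| n^(c Re s) Gamma(Re s + 1), are summable exactly
  because -c Re s > sigma.  Term-by-term integration then yields f(-cs) Gamma(s+1).
\<close>

lemma suminf_swap_abs:
  fixes u :: "nat \<Rightarrow> nat \<Rightarrow> complex"
  assumes rows: "\<And>j. summable (\<lambda>n. norm (u j n))"
      and total: "summable (\<lambda>j. \<Sum>n. norm (u j n))"
  shows "(\<Sum>j. \<Sum>n. u j n) = (\<Sum>n. \<Sum>j. u j n)"
proof -
  have row_int: "integrable (count_space UNIV) (u j)" for j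
    using rows by (simp add: integrable_count_space_nat_iff)
  have columns: "summable (\<lambda>j. norm (u j n))" for n
  proof (rule summable_comparison_test[OF _ total])
    have "norm (u j n) \<le> (\<Sum>n. norm (u j n))" for j
      using sum_le_suminf[OF rows[of j], of "{n}"] by simp
    thus "\<exists>N. \<forall>j\<ge>N. norm (norm (u j n)) \<le> (\<Sum>n. norm (u j n))" by simp
  qed
  have "(\<integral>n. norm (u j n) \<partial>count_space UNIV) = (\<Sum>n. norm (u j n))" for j
    using row_int[of j] by (intro integral_count_space_nat) (simp add: integrable_count_space_nat_iff)
  then have total': "summable (\<lambda>j. \<integral>n. norm (u j n) \<partial>count_space UNIV)"
    using total by simp
  note swap = integral_suminf[OF row_int AE_I2[OF columns] total']
    integrable_suminf[OF row_int AE_I2[OF columns] total']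
  have "(\<Sum>j. \<Sum>n. u j n) = (\<Sum>j. \<integral>n. u j n \<partial>count_space UNIV)"
    using row_int by (simp add: integral_count_space_nat)
  also have "\<dots> = (\<integral>n. (\<Sum>j. u j n) \<partial>count_space UNIV)" using swap(1) by simp
  also have "\<dots> = (\<Sum>n. \<Sum>j. u j n)" using swap(2) by (simp add: integral_count_space_nat)
  finally show ?thesis .
qed

lemma suminf_swap_product_bound:
  fixes u :: "nat \<Rightarrow> nat \<Rightarrow> complex" and p q :: "nat \<Rightarrow> real"
  assumes bound: "\<And>j n. norm (u j n) \<le> p n * q j"
      and p: "summable p" and q: "summable q"
  shows "(\<Sum>j. \<Sum>n. u j n) = (\<Sum>n. \<Sum>j. u j n)"
proof (rule suminf_swap_abs)
  show rows: "summable (\<lambda>n. norm (u j n))" for j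
    by (rule summable_comparison_test[OF _ summable_mult2[OF p, of "q j"]]) (use bound in auto)
  show "summable (\<lambda>j. \<Sum>n. norm (u j n))"
  proof (rule summable_comparison_test[OF _ summable_mult[OF q, of "\<Sum>n. p n"]])
    have "(\<Sum>n. norm (u j n)) \<le> (\<Sum>n. p n * q j)" for j
      by (rule suminf_le[OF bound rows summable_mult2[OF p]])
    moreover have "(\<Sum>n. p n * q j) = (\<Sum>n. p n) * q j" for j
      by (rule suminf_mult2[symmetric, OF p])
    moreover have "0 \<le> (\<Sum>n. norm (u j n))" for j
      by (rule suminf_nonneg[OF rows]) simp
    ultimately show "\<exists>N. \<forall>j\<ge>N. norm (\<Sum>n. norm (u j n)) \<le> (\<Sum>n. p n) * q j"
      by simp
  qed
qed

text \<open>Both sides are the two iterated sums of one absolutely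
  convergent double series.\<close>

lemma exp_series_interchange:
  fixes b :: "nat \<Rightarrow> complex" and lam :: "nat \<Rightarrow> real" and x :: real
  assumes lam: "\<And>n. 0 \<le> lam n" "\<And>n. lam n \<le> 1"
      and sum: "summable (\<lambda>n. norm (b n) * lam n)"
  shows "(\<Sum>j. (-1) ^ j * (\<Sum>n. b n * of_real (lam n ^ Suc j)) * of_real x ^ Suc j / of_nat (fact j))
       = (\<Sum>n. b n * of_real (lam n * x * exp (-(lam n * x))))"
proof -
  define K where "K j = (-1) ^ j * complex_of_real x ^ Suc j / of_nat (fact j)" for j
  define u where "u j n = b n * of_real (lam n ^ Suc j) * K j" for j n
  have moment_le: "norm (b n * of_real (lam n ^ Suc j)) \<le> norm (b n) * lam n" for n j
  proof -
    have "lam n ^ Suc j \<le> lam n"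
      using power_decreasing[of 1 "Suc j" "lam n"] lam by simp
    moreover have "norm (b n * of_real (lam n ^ Suc j)) = norm (b n) * lam n ^ Suc j"
      using lam(1)[of n] by (simp add: norm_mult norm_power)
    ultimately show ?thesis by (simp add: mult_left_mono)
  qed
  have u_le: "norm (u j n) \<le> norm (b n) * lam n * norm (K j)" for j n
    unfolding u_def norm_mult[of _ "K j"] by (rule mult_right_mono[OF moment_le]) simp
  have K_summable: "summable (\<lambda>j. norm (K j))"
  proof -
    have "summable (\<lambda>j. \<bar>x\<bar> * (\<bar>x\<bar> ^ j /\<^sub>R fact j))"
      using summable_mult[OF exp_converges[THEN sums_summable], of "\<bar>x\<bar>"] by simp
    thus ?thesis by (simp add: K_def norm_mult norm_divide norm_power divide_simps)
  qed
  have outer: "(-1) ^ j * (\<Sum>n. b n * of_real (lam n ^ Suc j)) * of_real x ^ Suc j / of_nat (fact j)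
                 = (\<Sum>n. u j n)" for j
  proof -
    have reorder: "\<And>p S X F :: complex. p * S * X / F = S * (p * X / F)"
      by (simp add: mult.left_commute)
    have "summable (\<lambda>n. b n * of_real (lam n ^ Suc j))"
      by (rule summable_norm_cancel, rule summable_comparison_test[OF _ sum]) (use moment_le in simp)
    then have "(\<Sum>n. b n * of_real (lam n ^ Suc j)) * K j = (\<Sum>n. u j n)"
      unfolding u_def by (rule suminf_mult2)
    then show ?thesis unfolding K_def reorder .
  qed
  have inner: "(\<Sum>j. u j n) = b n * of_real (lam n * x * exp (-(lam n * x)))" for n
  proof -
    define y where "y = lam n * x"
    have "(\<lambda>j. b n * of_real (y * ((-y) ^ j /\<^sub>R fact j))) sums (b n * of_real (y * exp (-y)))"
      by (intro sums_mult sums_of_real exp_converges)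
    moreover have "b n * of_real (y * ((-y) ^ j /\<^sub>R fact j)) = u j n" for j
    proof -
      have "y * ((-y) ^ j /\<^sub>R fact j) = (-1) ^ j * (lam n ^ Suc j * x ^ Suc j) / fact j"
        unfolding y_def power_minus[of "lam n * x"] by (simp add: power_mult_distrib divide_inverse mult_ac)
      then show ?thesis unfolding u_def K_def by (simp add: mult_ac)
    qed
    ultimately show ?thesis by (simp add: sums_iff y_def)
  qed
  have "(\<Sum>j. (-1) ^ j * (\<Sum>n. b n * of_real (lam n ^ Suc j)) * of_real x ^ Suc j / of_nat (fact j))
          = (\<Sum>j. \<Sum>n. u j n)"
    by (rule suminf_cong) (rule outer)
  also have "\<dots> = (\<Sum>n. \<Sum>j. u j n)"
    by (rule suminf_swap_product_bound[OF u_le sum K_summable])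
  also have "\<dots> = (\<Sum>n. b n * of_real (lam n * x * exp (-(lam n * x))))"
    by (rule suminf_cong) (rule inner)
  finally show ?thesis .
qed

lemma dir_f_at_multiple:
  fixes c :: real
  shows "dir_f a (complex_of_real (c * real (Suc j))) =
         (\<Sum>n. a (Suc n) * of_real ((real (Suc n) powr (-c)) ^ Suc j))"
  unfolding dir_f_def
proof (rule suminf_cong)
  fix n
  have "(of_nat (Suc n) :: complex) powr complex_of_real (c * real (Suc j)) =
        of_real (real (Suc n) powr (c * real (Suc j)))"
    by (metis of_real_of_nat_eq of_nat_0_le_iff powr_of_real)
  moreover have "(real (Suc n) powr (-c)) ^ Suc j = inverse (real (Suc n) powr (c * real (Suc j)))"
    by (subst powr_power) (auto simp: powr_minus mult.commute)
  ultimately show "a (Suc n) / of_nat (Suc n) powr complex_of_real (c * real (Suc j)) =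
         a (Suc n) * complex_of_real ((real (Suc n) powr (- c)) ^ Suc j)"
    by (simp add: divide_inverse)
qed

text \<open>Closed form of R_c as a superposition of the functions lam x exp(-lam x), lam = n powr (-c);
  here c > 0 guarantees that the weights lie in [0, 1].\<close>

lemma R_c_expansion:
  fixes c x :: real
  assumes c: "c > 0" and sum: "summable (\<lambda>n. norm (a (Suc n)) * real (Suc n) powr (-c))"
  shows "R_c a c x = (\<Sum>n. a (Suc n) * of_real (real (Suc n) powr (-c) * x * exp (-(real (Suc n) powr (-c) * x))))"
proof -
  have lam: "0 \<le> real (Suc n) powr (-c)" "real (Suc n) powr (-c) \<le> 1" for n
    using c by (simp_all add: powr_minus divide_simps ge_one_powr_ge_zero)
  show ?thesis
    unfolding R_c_def dir_f_at_multiple exp_series_interchange[OF lam sum, symmetric]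
    by simp
qed

text \<open>The superposition converges absolutely at every x \<ge> 0, since lam x exp(-lam x) \<le> lam x.\<close>

lemma summable_exp_kernel_series:
  fixes b :: "nat \<Rightarrow> complex" and lam :: "nat \<Rightarrow> real" and x :: real
  assumes lam: "\<And>n. lam n \<ge> 0" and sum: "summable (\<lambda>n. norm (b n) * lam n)" and x: "x \<ge> 0"
  shows "summable (\<lambda>n. norm (b n * of_real (lam n * x * exp (-(lam n * x)))))"
proof (rule summable_comparison_test[OF _ summable_mult2[OF sum, of x]])
  have "norm (b n * of_real (lam n * x * exp (-(lam n * x)))) \<le> norm (b n) * lam n * x" for n
  proof -
    have "lam n * x * exp (-(lam n * x)) \<le> lam n * x * 1"
      using lam[of n] x by (intro mult_left_mono) auto
    thus ?thesis using lam[of n] x by (simp add: norm_mult mult_left_mono mult.assoc)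
  qed
  thus "\<exists>N. \<forall>n\<ge>N. norm (norm (b n * of_real (lam n * x * exp (-(lam n * x))))) \<le> norm (b n) * lam n * x"
    by simp
qed

text \<open>The Gamma integral after the substitution t = b u:
  integral_0^oo t^(z-1) exp(-b t) dt = b^(-z) Gamma(z) for Re z > 0 and b > 0.\<close>

lemma has_integral_Gamma_scaled:
  fixes z :: complex and b :: real
  assumes z: "Re z > 0" and b: "b > 0"
  shows "((\<lambda>t. of_real t powr (z-1) / of_real (exp (b*t))) has_integral
            (of_real b powr (-z) * Gamma z)) {0<..}"
proof -
  define F where "F t = indicator {0<..} t *\<^sub>R (of_real t powr (z-1) / of_real (exp t) :: complex)" for t :: real
  define h where "h = (\<lambda>t::real. of_real t powr (z-1) / of_real (exp (b*t)) :: complex)"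
  have gamma_int: "set_integrable lebesgue {0<..} (\<lambda>t. of_real t powr (z-1) / of_real (exp t) :: complex)"
    using absolutely_integrable_Gamma_integral'[OF z] by simp
  have "(LINT t:{0<..}|lebesgue. of_real t powr (z-1) / of_real (exp t) :: complex) = Gamma z"
    using set_lebesgue_integral_eq_integral(2)[OF gamma_int] Gamma_integral_complex'[OF z]
    by (simp add: integral_unique)
  hence F_integral: "integral\<^sup>L lebesgue F = Gamma z"
    unfolding F_def by (simp add: set_lebesgue_integral_def)
  have h_int: "set_integrable lebesgue {0<..} h"
    using absolutely_integrable_Gamma_integral[OF z b] by (simp add: h_def)
  have F_scaled: "F (b * x) = of_real b powr (z-1) * (indicator {0<..} x *\<^sub>R h x)" for x :: real
  proof (cases "x > 0")
    case True
    have "of_real (b*x) powr (z-1) = of_real b powr (z-1) * (of_real x powr (z-1) :: complex)"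
      by (subst of_real_mult, rule powr_times_real) (use True b in auto)
    thus ?thesis using True b by (simp add: F_def h_def indicator_def)
  next
    case False
    hence "\<not> b * x > 0" using b by (simp add: mult_pos_pos zero_less_mult_iff)
    thus ?thesis using False by (simp add: F_def indicator_def)
  qed
  have "Gamma z = \<bar>b\<bar> *\<^sub>R integral\<^sup>L lebesgue (\<lambda>x. F (0 + b * x))"
    using F_integral lebesgue_integral_real_affine[of b F 0] b by simp
  also have "\<dots> = of_real b * (of_real b powr (z-1) * (LINT x:{0<..}|lebesgue. h x))"
    using b by (simp add: F_scaled set_lebesgue_integral_def scaleR_conv_of_real del: of_real_mult)
  also have "of_real b * (of_real b powr (z-1) * (LINT x:{0<..}|lebesgue. h x)) =
             of_real b powr z * (LINT x:{0<..}|lebesgue. h x)"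
  proof -
    have "(of_real b :: complex) powr z = of_real b powr ((z - 1) + 1)" by simp
    also have "\<dots> = of_real b powr (z-1) * of_real b powr 1" by (rule powr_add)
    also have "\<dots> = of_real b powr (z-1) * of_real b" by simp
    finally show ?thesis by simp
  qed
  finally have "(LINT x:{0<..}|lebesgue. h x) = of_real b powr (-z) * Gamma z"
    using b by (simp add: powr_minus field_simps)
  with has_integral_set_lebesgue[OF h_int] show ?thesis by (simp add: h_def)
qed

lemma has_integral_Gamma_scaled_real:
  fixes r b :: real
  assumes r: "r > 0" and b: "b > 0"
  shows "((\<lambda>t. t powr (r-1) / exp (b*t)) has_integral (b powr (-r) * Gamma r)) {0<..}"
proof -
  have "((\<lambda>t. of_real t powr (of_real r - 1) / of_real (exp (b*t))) has_integral
            (of_real b powr (- of_real r) * Gamma (of_real r :: complex))) {0<..}"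
    using has_integral_Gamma_scaled[of "of_real r" b] r b by simp
  also have "(of_real b powr (- of_real r) * Gamma (of_real r :: complex)) = of_real (b powr (-r) * Gamma r)"
    using b by (simp add: powr_of_real[symmetric] Gamma_complex_of_real)
  finally have complexified: "((\<lambda>t. of_real t powr (of_real r - 1) / of_real (exp (b*t))) has_integral
            (of_real (b powr (-r) * Gamma r) :: complex)) {0<..}" .
  have "((\<lambda>t. complex_of_real (t powr (r-1) / exp (b*t))) has_integral
            (of_real (b powr (-r) * Gamma r) :: complex)) {0<..}"
    by (rule has_integral_cong[THEN iffD1, OF _ complexified]) (simp add: powr_of_real[symmetric])
  from has_integral_linear[OF this bounded_linear_Re] show ?thesis by (simp add: o_def)
qed

lemma Mellin_exp_kernel:
  fixes lam :: real and s :: complex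
  assumes lam: "lam > 0" and s: "Re s > -1"
  defines "k \<equiv> \<lambda>x. of_real (lam * x * exp (-(lam * x))) * of_real x powr (s - 1)"
  shows "k absolutely_integrable_on {0<..}"
    and "integral {0<..} k = of_real lam powr (-s) * Gamma (s + 1)"
    and "integral {0<..} (\<lambda>x. norm (k x)) = lam powr (- Re s) * Gamma (Re s + 1)"
proof -
  have s1: "Re (s + 1) > 0" "Re s + 1 > 0" using s by simp_all
  have k_eq: "k x = of_real lam * (of_real x powr (s + 1 - 1) / of_real (exp (lam * x)))"
    if "x > 0" for x
  proof -
    have "(of_real x :: complex) powr (s + 1 - 1) = of_real x powr ((s - 1) + 1)"
      by (simp add: algebra_simps)
    also have "\<dots> = of_real x powr (s - 1) * of_real x powr 1"
      by (rule powr_add)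
    also have "\<dots> = of_real x powr (s - 1) * of_real x"
      using that by simp
    finally show ?thesis by (simp add: k_def exp_minus field_simps)
  qed
  have k_norm: "norm (k x) = lam * (x powr (Re s + 1 - 1) / exp (lam * x))" if "x > 0" for x
    using that lam by (simp add: k_eq norm_mult norm_divide norm_powr_real_powr)
  have "(\<lambda>x. of_real lam * (of_real x powr (s + 1 - 1) / of_real (exp (lam * x)) :: complex))
          absolutely_integrable_on {0<..}"
    by (rule set_integrable_mult_right) (rule absolutely_integrable_Gamma_integral[OF s1(1) lam])
  then show "k absolutely_integrable_on {0<..}"
    by (rule set_integrable_cong[THEN iffD1, rotated -1]) (simp_all add: k_eq)
  have "(k has_integral of_real lam * (of_real lam powr (-(s + 1)) * Gamma (s + 1))) {0<..}"
    by (rule has_integral_spike_eq[where S = "{}", THEN iffD1, rotated -1],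
        rule has_integral_mult_right, rule has_integral_Gamma_scaled[OF s1(1) lam]) (simp_all add: k_eq)
  moreover have "of_real lam * (of_real lam powr (-(s + 1))) = (of_real lam powr (-s) :: complex)"
    using lam by (simp add: powr_add[symmetric] powr_minus field_simps)
  ultimately show "integral {0<..} k = of_real lam powr (-s) * Gamma (s + 1)"
    by (simp add: integral_unique mult.assoc)
  have "((\<lambda>x. norm (k x)) has_integral lam * (lam powr (-(Re s + 1)) * Gamma (Re s + 1))) {0<..}"
    by (rule has_integral_spike_eq[where S = "{}", THEN iffD1, rotated -1],
        rule has_integral_mult_right, rule has_integral_Gamma_scaled_real[OF s1(2) lam]) (simp_all add: k_norm)
  moreover have "lam * lam powr (-(Re s + 1)) = lam powr (- Re s)"
    using lam by (simp add: powr_add[symmetric] powr_minus field_simps)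
  ultimately show "integral {0<..} (\<lambda>x. norm (k x)) = lam powr (- Re s) * Gamma (Re s + 1)"
    by (simp add: integral_unique mult.assoc)
qed

lemma Mellin_dirichlet_term:
  fixes m :: nat and c :: real and s b :: complex
  assumes m: "m > 0" and s: "Re s > -1"
  defines "k \<equiv> \<lambda>x. b * of_real (real m powr (-c) * x * exp (-(real m powr (-c) * x)))
                   * of_real x powr (s - 1)"
  shows "k absolutely_integrable_on {0<..}"
    and "integral {0<..} k = b / of_nat m powr (- of_real c * s) * Gamma (s + 1)"
    and "integral {0<..} (\<lambda>x. norm (k x)) = Gamma (Re s + 1) * (norm b / real m powr (- c * Re s))"
proof -
  define lam where "lam = real m powr (-c)"
  have lam: "lam > 0" using m by (simp add: lam_def)
  note kernel = Mellin_exp_kernel[OF lam s]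
  have k_eq: "k = (\<lambda>x. b * (of_real (lam * x * exp (-(lam * x))) * of_real x powr (s - 1)))"
    by (simp add: k_def lam_def mult.assoc)
  show "k absolutely_integrable_on {0<..}"
    unfolding k_eq by (rule set_integrable_mult_right[OF kernel(1)])
  have "(of_real lam :: complex) powr (-s) = of_real (real m) powr (of_real (-c) * (-s))"
    unfolding lam_def using m by (simp add: powr_def Ln_of_real mult_ac)
  also have "\<dots> = inverse (of_nat m powr (- of_real c * s))"
    by (simp add: powr_minus[symmetric])
  finally show "integral {0<..} k = b / of_nat m powr (- of_real c * s) * Gamma (s + 1)"
    unfolding k_eq integral_mult_right kernel(2) by (simp add: divide_inverse mult_ac)
  have lam_pow: "lam powr (- Re s) = inverse (real m powr (- c * Re s))"
    unfolding lam_def powr_powr by (simp add: powr_minus[symmetric])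
  have norm_k: "(\<lambda>x. norm (k x))
      = (\<lambda>x. norm b * norm (of_real (lam * x * exp (-(lam * x))) * of_real x powr (s - 1)))"
    unfolding k_eq norm_mult ..
  show "integral {0<..} (\<lambda>x. norm (k x)) = Gamma (Re s + 1) * (norm b / real m powr (- c * Re s))"
    unfolding norm_k integral_mult_right kernel(3) lam_pow by (simp add: divide_inverse)
qed

lemma absolutely_integrable_suminf:
  fixes f :: "nat \<Rightarrow> 'a::euclidean_space \<Rightarrow> 'b::euclidean_space"
    and F :: "'a \<Rightarrow> 'b" and S :: "'a set"
  assumes int: "\<And>n. f n absolutely_integrable_on S"
      and pointwise: "\<And>x. x \<in> S \<Longrightarrow> summable (\<lambda>n. norm (f n x))"
      and norms: "summable (\<lambda>n. integral S (\<lambda>x. norm (f n x)))"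
      and F: "\<And>x. x \<in> S \<Longrightarrow> F x = (\<Sum>n. f n x)"
  shows "F absolutely_integrable_on S \<and> integral S F = (\<Sum>n. integral S (f n))"
proof -
  define g where "g n x = indicator S x *\<^sub>R f n x" for n x
  have g_int: "integrable lebesgue (g n)" for n
    using int[of n] by (simp add: g_def[abs_def] set_integrable_def)
  have g_summable: "summable (\<lambda>n. norm (g n x))" for x
    using pointwise[of x] by (cases "x \<in> S") (simp_all add: g_def)
  have g_norm: "(\<integral>x. norm (g n x) \<partial>lebesgue) = integral S (\<lambda>x. norm (f n x))" for n
  proof -
    have "(\<integral>x. norm (g n x) \<partial>lebesgue) = (LINT x:S|lebesgue. norm (f n x))"
      by (simp add: g_def set_lebesgue_integral_def)
    also have "\<dots> = integral S (\<lambda>x. norm (f n x))"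
      by (rule set_lebesgue_integral_eq_integral(2)[OF set_integrable_norm[OF int]])
    finally show ?thesis .
  qed
  have norms': "summable (\<lambda>n. \<integral>x. norm (g n x) \<partial>lebesgue)"
    using norms by (simp add: g_norm)
  have g_sum: "(\<lambda>x. \<Sum>n. g n x) = (\<lambda>x. indicator S x *\<^sub>R F x)"
  proof
    show "(\<Sum>n. g n x) = indicator S x *\<^sub>R F x" for x
      by (cases "x \<in> S") (simp_all add: g_def F)
  qed
  note sum_int = integrable_suminf[OF g_int AE_I2[OF g_summable] norms']
        integral_suminf[OF g_int AE_I2[OF g_summable] norms']
  have F_int: "F absolutely_integrable_on S"
    using sum_int(1) by (simp add: g_sum set_integrable_def)
  have "integral S F = (LINT x:S|lebesgue. F x)"
    by (rule set_lebesgue_integral_eq_integral(2)[OF F_int, symmetric])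
  also have "\<dots> = (\<Sum>n. integral\<^sup>L lebesgue (g n))"
    using sum_int(2) by (simp add: g_sum set_lebesgue_integral_def)
  also have "\<dots> = (\<Sum>n. integral S (f n))"
  proof (rule suminf_cong)
    show "integral\<^sup>L lebesgue (g n) = integral S (f n)" for n
      using set_lebesgue_integral_eq_integral(2)[OF int[of n]]
      by (simp add: g_def[abs_def] set_lebesgue_integral_def)
  qed
  finally show ?thesis using F_int by simp
qed

theorem theorem2:
  fixes a :: "nat \<Rightarrow> complex" and \<sigma> c :: real and s :: complex
  assumes abs_conv: "\<And>t::real. t > \<sigma> \<Longrightarrow> summable (\<lambda>n. norm (a (Suc n)) / real (Suc n) powr t)"
      and abs_div: "\<And>t::real. t < \<sigma> \<Longrightarrow> \<not> summable (\<lambda>n. norm (a (Suc n)) / real (Suc n) powr t)"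
      and c_pos: "c > 0" and c_gt: "c > \<sigma>"
      and s_lo: "-1 < Re s" and s_hi: "Re s < - \<sigma> / c"
  shows "(\<lambda>x. R_c a c x * complex_of_real x powr (s - 1)) absolutely_integrable_on {0<..}
       \<and> integral {0<..} (\<lambda>x. R_c a c x * complex_of_real x powr (s - 1))
           = dir_f a (- (complex_of_real c) * s) * Gamma (s + 1)"
proof -
  define k where "k n x = a (Suc n) * of_real (real (Suc n) powr (-c) * x * exp (-(real (Suc n) powr (-c) * x)))
                            * of_real x powr (s - 1)" for n x
  have conv_c: "summable (\<lambda>n. norm (a (Suc n)) * real (Suc n) powr (-c))"
    using abs_conv[OF c_gt] by (simp add: powr_minus divide_inverse)
  \<comment> \<open>Absolute convergence at -c Re s > sigma controls the absolute Mellin integrals.\<close>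
  have conv_s: "summable (\<lambda>n. norm (a (Suc n)) / real (Suc n) powr (- c * Re s))"
    by (rule abs_conv) (use s_hi c_pos in \<open>simp add: field_simps\<close>)
  have mellin_term: "k n absolutely_integrable_on {0<..}"
    "integral {0<..} (k n) = a (Suc n) / of_nat (Suc n) powr (- of_real c * s) * Gamma (s + 1)"
    "integral {0<..} (\<lambda>x. norm (k n x)) = Gamma (Re s + 1) * (norm (a (Suc n)) / real (Suc n) powr (- c * Re s))"
    for n using Mellin_dirichlet_term[where m = "Suc n" and b = "a (Suc n)"] s_lo by (simp_all add: k_def[abs_def])
  have kernel_series: "summable (\<lambda>n. norm (a (Suc n) * of_real (real (Suc n) powr (-c) * x * exp (-(real (Suc n) powr (-c) * x)))))"
    if "x > 0" for x
    using summable_exp_kernel_series[OF _ conv_c] that by simp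
  have expansion: "R_c a c x * of_real x powr (s - 1) = (\<Sum>n. k n x)" if "x \<in> {0<..}" for x
    unfolding R_c_expansion[OF c_pos conv_c] k_def
    by (rule suminf_mult2, rule summable_norm_cancel, rule kernel_series) (use that in simp)
  have pointwise_abs: "summable (\<lambda>n. norm (k n x))" if "x \<in> {0<..}" for x
    using summable_mult2[OF kernel_series, of x "norm (of_real x powr (s - 1) :: complex)"] that
    by (simp add: k_def norm_mult)
  have norms: "summable (\<lambda>n. integral {0<..} (\<lambda>x. norm (k n x)))"
    unfolding mellin_term(3) by (rule summable_mult[OF conv_s])
  have dirichlet: "(\<Sum>n. a (Suc n) / of_nat (Suc n) powr (- of_real c * s) * Gamma (s + 1))
                     = dir_f a (- of_real c * s) * Gamma (s + 1)"
    unfolding dir_f_def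
    by (rule suminf_mult2[symmetric], rule summable_norm_cancel)
       (use conv_s in \<open>simp add: norm_divide norm_powr_real_powr\<close>)
  from absolutely_integrable_suminf[OF mellin_term(1) pointwise_abs norms expansion]
  show ?thesis unfolding mellin_term(2) dirichlet .
qed

end
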